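(* Let $V$ be a complex normed vector space and $x=\{x_n\}_{n=1}^\infty\in l^{\infty}(V)$. If $x$ is strongly almost convergent to $v\in V$, then $v\in\overline{\mathrm{co}}\{x_n:n\in\mathbb{N}\}$, the norm-closure of the convex hull of $\{x_n:n\in\mathbb{N}\}$.
   Context: $l^{\infty}(V)$ is the space of bounded sequences $x=\{x_n\}_{n=1}^\infty$ in $V$ with norm $\|x\|_\infty=\sup_n\|x_n\|_V$. For $v\in V$, $\widetilde v=\{v,v,\dots\}$. $T$ is the left shift: $T\{x_1,x_2,\dots\}=\{x_2,x_3,\dots\}$. A Banach limit functional is a bounded linear functional $L$ on $l^\infty(V)$ with $\|L\|\le1$ and $L(Tx)=L(x)$ for all $x$. A sequence $x\in l^\infty(V)$ is strongly almost convergent to $v\in V$ if $L(x)=L(\widetilde v)$ for every Banach limit functional $L$. *)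

theory Defs
  imports "HOL-Analysis.Analysis"
begin

text \<open>Complex vector spaces: a real vector space with a compatible complex scalar
  multiplication (the HOL distribution has no such class).\<close>
class complex_vector = real_vector +
  fixes scaleC :: "complex \<Rightarrow> 'a \<Rightarrow> 'a"
  assumes scaleC_add_right: "scaleC a (x + y) = scaleC a x + scaleC a y"
    and scaleC_add_left: "scaleC (a + b) x = scaleC a x + scaleC b x"
    and scaleC_scaleC: "scaleC a (scaleC b x) = scaleC (a * b) x"
    and scaleC_one: "scaleC 1 x = x"
    and scaleR_scaleC: "scaleR r x = scaleC (complex_of_real r) x"

class complex_normed_vector = complex_vector + real_normed_vector +
  assumes norm_scaleC: "norm (scaleC a x) = cmod a * norm x"

text \<open>l-infinity(V): bounded sequences (indexed from 0), with sup norm.\<close>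
definition linf :: "(nat \<Rightarrow> 'a::real_normed_vector) set" where
  "linf = {x. bounded (range x)}"

definition sup_norm :: "(nat \<Rightarrow> 'a::real_normed_vector) \<Rightarrow> real" where
  "sup_norm x = (SUP n. norm (x n))"

definition shift :: "(nat \<Rightarrow> 'a) \<Rightarrow> nat \<Rightarrow> 'a" where
  "shift x = (\<lambda>n. x (Suc n))"

definition const_seq :: "'a \<Rightarrow> nat \<Rightarrow> 'a" where
  "const_seq v = (\<lambda>n. v)"

text \<open>Banach limit functional: complex-linear functional on l-infinity(V) with
  operator norm at most 1, invariant under the left shift.  Only its values on
  linf matter.\<close>
definition banach_limit_functional ::
  "((nat \<Rightarrow> 'a::complex_normed_vector) \<Rightarrow> complex) \<Rightarrow> bool" where
  "banach_limit_functional L \<longleftrightarrow>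
     (\<forall>x\<in>linf. \<forall>y\<in>linf. L (\<lambda>n. x n + y n) = L x + L y) \<and>
     (\<forall>c. \<forall>x\<in>linf. L (\<lambda>n. scaleC c (x n)) = c * L x) \<and>
     (\<forall>x\<in>linf. cmod (L x) \<le> sup_norm x) \<and>
     (\<forall>x\<in>linf. L (shift x) = L x)"

definition strongly_almost_convergent ::
  "(nat \<Rightarrow> 'a::complex_normed_vector) \<Rightarrow> 'a \<Rightarrow> bool" where
  "strongly_almost_convergent x v \<longleftrightarrow>
     (\<forall>L. banach_limit_functional L \<longrightarrow> L x = L (const_seq v))"

end

theory Submission
  imports Defs "HOL-Library.Function_Algebras"
begin

(* Suppose v is not in the closure of the convex hull H of {x n}.  A real-linear
   functional f with |f| \<le> norm separates v strictly from H: f v + \<delta> \<le> f c for all c in H.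
   Composing f with a real Banach limit F and complexifying gives a Banach limit
   functional L on l-infinity(V) with Re (L y) = F (f \<circ> y) / 2.  Since F is bounded below
   by lower bounds of the sequence and fixes constants, Re (L x) \<ge> (f v + \<delta>) / 2 > f v / 2
   = Re (L (const_seq v)), contradicting strong almost convergence. *)

definition sublinear_on :: "'a::real_vector set \<Rightarrow> ('a \<Rightarrow> real) \<Rightarrow> bool" where
  "sublinear_on S q \<longleftrightarrow>
     (\<forall>x\<in>S. \<forall>y\<in>S. q (x + y) \<le> q x + q y) \<and> (\<forall>c>0. \<forall>x\<in>S. q (c *\<^sub>R x) \<le> c * q x)"

lemma sublinear_onI:
  assumes "\<And>x y. x \<in> S \<Longrightarrow> y \<in> S \<Longrightarrow> q (x + y) \<le> q x + q y"
    and "\<And>c x. c > 0 \<Longrightarrow> x \<in> S \<Longrightarrow> q (c *\<^sub>R x) \<le> c * q x"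
  shows "sublinear_on S q"
  using assms unfolding sublinear_on_def by blast

lemma sublinear_onD:
  assumes "sublinear_on S q"
  shows "\<And>x y. x \<in> S \<Longrightarrow> y \<in> S \<Longrightarrow> q (x + y) \<le> q x + q y"
    and "\<And>c x. c > 0 \<Longrightarrow> x \<in> S \<Longrightarrow> q (c *\<^sub>R x) \<le> c * q x"
  using assms unfolding sublinear_on_def by blast+

lemma sublinear_on_zero:
  assumes S: "subspace S" and q: "sublinear_on S q"
  shows "q 0 = 0"
proof -
  have "0 \<in> S" using S by (rule subspace_0)
  have "q (0 + 0) \<le> q 0 + q 0" using sublinear_onD(1)[OF q \<open>0 \<in> S\<close> \<open>0 \<in> S\<close>] .
  moreover have "q ((1/2) *\<^sub>R 0) \<le> (1/2) * q 0"
    using sublinear_onD(2)[OF q _ \<open>0 \<in> S\<close>, of "1/2"] by simp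
  ultimately show ?thesis by simp
qed

lemma sublinear_on_neg:
  assumes S: "subspace S" and q: "sublinear_on S q" and y: "y \<in> S"
  shows "- q (- y) \<le> q y"
proof -
  have "- y \<in> S" using S y by (rule subspace_neg)
  then have "q (y + - y) \<le> q y + q (- y)" using sublinear_onD(1)[OF q y] by blast
  then show ?thesis using sublinear_on_zero[OF S q] by simp
qed

lemma sublinear_on_scale_ge:
  assumes S: "subspace S" and q: "sublinear_on S q" and c: "c > 0" and x: "x \<in> S"
  shows "c * q x \<le> q (c *\<^sub>R x)"
proof -
  have "c *\<^sub>R x \<in> S" using S x by (rule subspace_scale)
  then have "q (inverse c *\<^sub>R (c *\<^sub>R x)) \<le> inverse c * q (c *\<^sub>R x)"
    using sublinear_onD(2)[OF q _ \<open>c *\<^sub>R x \<in> S\<close>, of "inverse c"] c by simp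
  then have "q x \<le> inverse c * q (c *\<^sub>R x)" using c by simp
  then show ?thesis using c by (simp add: field_simps)
qed

lemma sublinear_on_cong:
  assumes S: "subspace S" and q: "sublinear_on S q" and eq: "\<And>y. y \<in> S \<Longrightarrow> q' y = q y"
  shows "sublinear_on S q'"
  using sublinear_onD[OF q] eq S by (intro sublinear_onI) (simp_all add: subspace_add subspace_scale)

lemma le_INF_add:
  fixes g h :: "_ \<Rightarrow> real"
  assumes "I \<noteq> {}" "J \<noteq> {}" "bdd_below (g ` I)" "bdd_below (h ` J)"
    and "\<And>a b. a \<in> I \<Longrightarrow> b \<in> J \<Longrightarrow> z \<le> g a + h b"
  shows "z \<le> (INF a\<in>I. g a) + (INF b\<in>J. h b)"
proof -
  have "z - h b \<le> (INF a\<in>I. g a)" if "b \<in> J" for b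
    using assms(5) that by (intro cINF_greatest[OF assms(1)]) (simp add: algebra_simps)
  then have "z - (INF a\<in>I. g a) \<le> (INF b\<in>J. h b)"
    by (intro cINF_greatest[OF assms(2)]) (simp add: algebra_simps)
  then show ?thesis by linarith
qed

lemma le_mult_INF:
  fixes g :: "_ \<Rightarrow> real"
  assumes "I \<noteq> {}" "c > 0" "\<And>a. a \<in> I \<Longrightarrow> z \<le> c * g a"
  shows "z \<le> c * (INF a\<in>I. g a)"
proof -
  have "z / c \<le> (INF a\<in>I. g a)"
    using assms by (intro cINF_greatest) (simp_all add: divide_le_eq mult.commute)
  then show ?thesis using assms(2) by (simp add: divide_le_eq mult.commute)
qed

(* The pointwise infimum of a nonempty chain of sublinear functionals dominated by p
   is sublinear: this is what makes Zorn's lemma applicable. *)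
lemma sublinear_on_chain_INF:
  assumes S: "subspace S" and ne: "C \<noteq> {}"
    and C: "\<And>q. q \<in> C \<Longrightarrow> sublinear_on S q \<and> (\<forall>y\<in>S. q y \<le> p y)"
    and chain: "\<And>q1 q2. q1 \<in> C \<Longrightarrow> q2 \<in> C \<Longrightarrow> (\<forall>y\<in>S. q1 y \<le> q2 y) \<or> (\<forall>y\<in>S. q2 y \<le> q1 y)"
  shows "sublinear_on S (\<lambda>y. INF q\<in>C. q y)"
    and "\<And>q y. q \<in> C \<Longrightarrow> y \<in> S \<Longrightarrow> (INF q\<in>C. q y) \<le> q y"
proof -
  have bdd: "bdd_below ((\<lambda>q. q y) ` C)" if "y \<in> S" for y
  proof (rule bdd_belowI2)
    fix q assume "q \<in> C"
    then show "- p (- y) \<le> q y"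
      using C sublinear_on_neg[OF S _ that] subspace_neg[OF S that] by force
  qed
  show lower: "(INF q\<in>C. q y) \<le> q y" if "q \<in> C" "y \<in> S" for q y
    using cINF_lower[OF bdd] that by blast
  show "sublinear_on S (\<lambda>y. INF q\<in>C. q y)"
  proof (rule sublinear_onI)
    fix x y assume x: "x \<in> S" and y: "y \<in> S"
    show "(INF q\<in>C. q (x + y)) \<le> (INF q\<in>C. q x) + (INF q\<in>C. q y)"
    proof (rule le_INF_add[OF ne ne bdd[OF x] bdd[OF y]])
      fix q1 q2 assume q: "q1 \<in> C" "q2 \<in> C"
      have "q1 (x + y) \<le> q1 x + q1 y" "q2 (x + y) \<le> q2 x + q2 y"
        using C q sublinear_onD(1) x y by blast+
      moreover have "(INF q\<in>C. q (x + y)) \<le> q1 (x + y)" "(INF q\<in>C. q (x + y)) \<le> q2 (x + y)"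
        using lower q subspace_add[OF S x y] by auto
      moreover have "q2 x \<le> q1 x \<or> q1 y \<le> q2 y" using chain[OF q] x y by blast
      ultimately show "(INF q\<in>C. q (x + y)) \<le> q1 x + q2 y" by linarith
    qed
  next
    fix c :: real and x assume c: "c > 0" and x: "x \<in> S"
    show "(INF q\<in>C. q (c *\<^sub>R x)) \<le> c * (INF q\<in>C. q x)"
    proof (rule le_mult_INF[OF ne c])
      fix q assume q: "q \<in> C"
      then have "q (c *\<^sub>R x) \<le> c * q x" using C c x sublinear_onD(2) by blast
      then show "(INF q\<in>C. q (c *\<^sub>R x)) \<le> c * q x"
        using lower[OF q subspace_scale[OF S x, of c]] by linarith
    qed
  qed
qed

definition directional_inf :: "('a::real_vector \<Rightarrow> real) \<Rightarrow> 'a \<Rightarrow> 'a \<Rightarrow> real" where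
  "directional_inf m z y = (INF t\<in>{0..}. m (y + t *\<^sub>R z) - t * m z)"

lemma directional_inf_le:
  assumes S: "subspace S" and m: "sublinear_on S m" and z: "z \<in> S" and y: "y \<in> S"
  shows "bdd_below ((\<lambda>t. m (y + t *\<^sub>R z) - t * m z) ` {0..})"
    and "t \<ge> 0 \<Longrightarrow> directional_inf m z y \<le> m (y + t *\<^sub>R z) - t * m z"
proof -
  show bdd: "bdd_below ((\<lambda>t. m (y + t *\<^sub>R z) - t * m z) ` {0..})"
  proof (rule bdd_belowI2)
    fix t :: real assume "t \<in> {0..}"
    then have "t * m z \<le> m (t *\<^sub>R z)"
      using sublinear_on_scale_ge[OF S m _ z] sublinear_on_zero[OF S m] by (cases "t = 0") auto
    moreover have "m ((y + t *\<^sub>R z) + - y) \<le> m (y + t *\<^sub>R z) + m (- y)"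
      using S y z by (intro sublinear_onD(1)[OF m]) (simp_all add: subspace_add subspace_scale subspace_neg)
    ultimately show "- m (- y) \<le> m (y + t *\<^sub>R z) - t * m z" by simp
  qed
  show "directional_inf m z y \<le> m (y + t *\<^sub>R z) - t * m z" if "t \<ge> 0"
    unfolding directional_inf_def using cINF_lower[OF bdd] that by simp
qed

lemma directional_inf_sublinear:
  assumes S: "subspace S" and m: "sublinear_on S m" and z: "z \<in> S"
  shows "sublinear_on S (directional_inf m z)"
proof (rule sublinear_onI)
  have in_S: "y + t *\<^sub>R z \<in> S" if "y \<in> S" for y t
    using S that z by (simp add: subspace_add subspace_scale)
  note le = directional_inf_le[OF S m z]
  fix x y assume x: "x \<in> S" and y: "y \<in> S"
  show "directional_inf m z (x + y) \<le> directional_inf m z x + directional_inf m z y"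
    unfolding directional_inf_def[of m z x] directional_inf_def[of m z y]
  proof (rule le_INF_add[OF _ _ le(1)[OF x] le(1)[OF y]])
    fix t1 t2 :: real assume t: "t1 \<in> {0..}" "t2 \<in> {0..}"
    have "directional_inf m z (x + y) \<le> m ((x + y) + (t1 + t2) *\<^sub>R z) - (t1 + t2) * m z"
      using le(2)[of "x + y" "t1 + t2"] t subspace_add[OF S x y] by simp
    also have "\<dots> = m ((x + t1 *\<^sub>R z) + (y + t2 *\<^sub>R z)) - t1 * m z - t2 * m z"
      by (simp add: algebra_simps scaleR_add_left)
    also have "\<dots> \<le> (m (x + t1 *\<^sub>R z) - t1 * m z) + (m (y + t2 *\<^sub>R z) - t2 * m z)"
      using sublinear_onD(1)[OF m in_S[OF x] in_S[OF y]] by simp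
    finally show "directional_inf m z (x + y)
        \<le> (m (x + t1 *\<^sub>R z) - t1 * m z) + (m (y + t2 *\<^sub>R z) - t2 * m z)" .
  qed auto
next
  note le = directional_inf_le[OF S m z]
  fix c :: real and x assume c: "c > 0" and x: "x \<in> S"
  show "directional_inf m z (c *\<^sub>R x) \<le> c * directional_inf m z x"
    unfolding directional_inf_def[of m z x]
  proof (rule le_mult_INF[OF _ c])
    fix t :: real assume t: "t \<in> {0..}"
    have "directional_inf m z (c *\<^sub>R x) \<le> m (c *\<^sub>R (x + t *\<^sub>R z)) - c * (t * m z)"
      using le(2)[of "c *\<^sub>R x" "c * t"] t c subspace_scale[OF S x] by (simp add: algebra_simps)
    also have "\<dots> \<le> c * (m (x + t *\<^sub>R z) - t * m z)"
      using sublinear_onD(2)[OF m c] S x z by (simp add: right_diff_distrib subspace_add subspace_scale)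
    finally show "directional_inf m z (c *\<^sub>R x) \<le> c * (m (x + t *\<^sub>R z) - t * m z)" .
  qed auto
qed

(* A sublinear functional that is minimal (no sublinear functional lies strictly below it)
   is linear: comparing m with its directional infimum in direction z yields additivity. *)
lemma minimal_sublinear_on_linear:
  assumes S: "subspace S" and m: "sublinear_on S m"
    and minimal: "\<And>q. sublinear_on S q \<Longrightarrow> \<forall>y\<in>S. q y \<le> m y \<Longrightarrow> \<forall>y\<in>S. q y = m y"
  shows "\<And>y z. y \<in> S \<Longrightarrow> z \<in> S \<Longrightarrow> m (y + z) = m y + m z"
    and "\<And>c y. y \<in> S \<Longrightarrow> m (c *\<^sub>R y) = c * m y"
proof -
  show add: "m (y + z) = m y + m z" if y: "y \<in> S" and z: "z \<in> S" for y z
  proof -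
    have "\<forall>y\<in>S. directional_inf m z y \<le> m y"
      using directional_inf_le(2)[OF S m z, of _ 0] by simp
    then have "directional_inf m z y = m y"
      using minimal[OF directional_inf_sublinear[OF S m z]] y by blast
    then have "m y \<le> m (y + z) - m z" using directional_inf_le(2)[OF S m z y, of 1] by simp
    then show ?thesis using sublinear_onD(1)[OF m y z] by linarith
  qed
  show "m (c *\<^sub>R y) = c * m y" if y: "y \<in> S" for c y
  proof -
    have pos: "m (c *\<^sub>R y) = c * m y" if "c > 0" for c
      using sublinear_onD(2)[OF m that y] sublinear_on_scale_ge[OF S m that y] by linarith
    have neg: "m (- x) = - m x" if "x \<in> S" for x
      using add[OF that subspace_neg[OF S that]] sublinear_on_zero[OF S m] by simp
    show ?thesis
    proof (cases c "0::real" rule: linorder_cases)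
      case less
      have "m (c *\<^sub>R y) = - m ((- c) *\<^sub>R y)" using neg[OF subspace_scale[OF S y, of "- c"]] by simp
      then show ?thesis using pos[of "- c"] less by simp
    qed (use pos sublinear_on_zero[OF S m] in auto)
  qed
qed

(* The sublinear functionals below p, normalised to vanish outside S, ordered by
   reverse pointwise comparison on S; the normalisation makes the order antisymmetric. *)
definition zero_outside :: "'a set \<Rightarrow> ('a \<Rightarrow> real) \<Rightarrow> 'a \<Rightarrow> real" where
  "zero_outside S q y = (if y \<in> S then q y else 0)"

definition sublinear_minorants :: "'a::real_vector set \<Rightarrow> ('a \<Rightarrow> real) \<Rightarrow> ('a \<Rightarrow> real) set" where
  "sublinear_minorants S p =
     {q. sublinear_on S q \<and> (\<forall>y\<in>S. q y \<le> p y) \<and> zero_outside S q = q}"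

definition minorant_order :: "'a::real_vector set \<Rightarrow> ('a \<Rightarrow> real) \<Rightarrow> (('a \<Rightarrow> real) \<times> ('a \<Rightarrow> real)) set" where
  "minorant_order S p = {(q1, q2). q1 \<in> sublinear_minorants S p \<and> q2 \<in> sublinear_minorants S p
     \<and> (\<forall>y\<in>S. q2 y \<le> q1 y)}"

lemma zero_outside_minorant:
  assumes "subspace S" "sublinear_on S q" "\<forall>y\<in>S. q y \<le> p y"
  shows "zero_outside S q \<in> sublinear_minorants S p"
  using assms sublinear_on_cong[OF assms(1,2), of "zero_outside S q"]
  unfolding sublinear_minorants_def zero_outside_def by auto

lemma Field_minorant_order: "Field (minorant_order S p) = sublinear_minorants S p"
  unfolding minorant_order_def Field_def by auto

lemma partial_order_minorant_order: "Partial_order (minorant_order S p)"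
  unfolding partial_order_on_def preorder_on_def Field_minorant_order refl_on_def trans_def antisym_def
proof (intro conjI ballI allI impI)
  show "minorant_order S p \<subseteq> sublinear_minorants S p \<times> sublinear_minorants S p"
    and "q \<in> sublinear_minorants S p \<Longrightarrow> (q, q) \<in> minorant_order S p" for q
    unfolding minorant_order_def by auto
next
  fix q1 q2 q3 assume "(q1, q2) \<in> minorant_order S p" "(q2, q3) \<in> minorant_order S p"
  then show "(q1, q3) \<in> minorant_order S p" unfolding minorant_order_def by (auto intro: order_trans)
next
  fix q1 q2 assume "(q1, q2) \<in> minorant_order S p" "(q2, q1) \<in> minorant_order S p"
  then have "zero_outside S q1 = zero_outside S q2"
    and "q1 \<in> sublinear_minorants S p" "q2 \<in> sublinear_minorants S p"
    unfolding minorant_order_def zero_outside_def by (force intro!: ext order.antisym)+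
  then show "q1 = q2" unfolding sublinear_minorants_def by auto
qed

(* Every chain of sublinear minorants has a lower bound, namely its pointwise infimum. *)
lemma minorant_order_chain_bounded:
  assumes S: "subspace S" and p: "sublinear_on S p" and C: "C \<in> Chains (minorant_order S p)"
  shows "\<exists>u\<in>Field (minorant_order S p). \<forall>q\<in>C. (q, u) \<in> minorant_order S p"
proof (cases "C = {}")
  case True
  have "zero_outside S p \<in> sublinear_minorants S p" using zero_outside_minorant[OF S p] by simp
  then show ?thesis using True unfolding Field_minorant_order by blast
next
  case False
  have CA: "C \<subseteq> sublinear_minorants S p" using C unfolding Chains_def minorant_order_def by blast
  have hyps: "sublinear_on S q \<and> (\<forall>y\<in>S. q y \<le> p y)" if "q \<in> C" for q
    using that CA unfolding sublinear_minorants_def by blast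
  have chain: "(\<forall>y\<in>S. q1 y \<le> q2 y) \<or> (\<forall>y\<in>S. q2 y \<le> q1 y)" if "q1 \<in> C" "q2 \<in> C" for q1 q2
    using C that unfolding Chains_def minorant_order_def by blast
  note inf = sublinear_on_chain_INF[OF S False, of p]
  define u where "u = zero_outside S (\<lambda>y. INF q\<in>C. q y)"
  have u_le: "u y \<le> q y" if "q \<in> C" "y \<in> S" for q y
  proof -
    have "u y = (INF q\<in>C. q y)" unfolding u_def zero_outside_def using that(2) by (rule if_P)
    then show ?thesis using inf(2)[OF hyps chain that] by (rule ord_eq_le_trans)
  qed
  obtain q0 where q0: "q0 \<in> C" using False by blast
  have "\<forall>y\<in>S. (INF q\<in>C. q y) \<le> p y"
  proof
    fix y assume y: "y \<in> S"
    have "(INF q\<in>C. q y) \<le> q0 y" using inf(2)[OF hyps chain q0 y] .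
    also have "q0 y \<le> p y" using hyps[OF q0] y by blast
    finally show "(INF q\<in>C. q y) \<le> p y" .
  qed
  then have uA: "u \<in> sublinear_minorants S p" unfolding u_def using zero_outside_minorant[OF S inf(1)[OF hyps chain]] by blast
  have "(q, u) \<in> minorant_order S p" if "q \<in> C" for q
    using that CA uA u_le unfolding minorant_order_def by blast
  then show ?thesis using uA unfolding Field_minorant_order by blast
qed

(* Hahn-Banach: every sublinear functional on a subspace dominates a linear one.  By
   Zorn's lemma there is a minimal sublinear functional below p, and minimal ones are
   linear. *)
theorem hahn_banach_sublinear:
  assumes S: "subspace S" and p: "sublinear_on S p"
  obtains f where "\<And>x y. x \<in> S \<Longrightarrow> y \<in> S \<Longrightarrow> f (x + y) = f x + f y"
    and "\<And>c x. x \<in> S \<Longrightarrow> f (c *\<^sub>R x) = c * f x" and "\<And>x. x \<in> S \<Longrightarrow> f x \<le> p x"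
proof -
  obtain m where m: "m \<in> sublinear_minorants S p"
    and max: "\<And>q. q \<in> sublinear_minorants S p \<Longrightarrow> (m, q) \<in> minorant_order S p \<Longrightarrow> q = m"
    using Zorns_po_lemma[OF partial_order_minorant_order minorant_order_chain_bounded[OF S p]]
    unfolding Field_minorant_order by blast
  have ms: "sublinear_on S m" and mp: "\<And>x. x \<in> S \<Longrightarrow> m x \<le> p x"
    using m unfolding sublinear_minorants_def by blast+
  have minimal: "\<forall>y\<in>S. q y = m y" if q: "sublinear_on S q" "\<forall>y\<in>S. q y \<le> m y" for q
  proof
    fix y assume y: "y \<in> S"
    have "\<forall>y\<in>S. q y \<le> p y" using q(2) mp by force
    then have qA: "zero_outside S q \<in> sublinear_minorants S p" using zero_outside_minorant[OF S q(1)] by blast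
    moreover have "(m, zero_outside S q) \<in> minorant_order S p"
      using m qA q(2) unfolding minorant_order_def zero_outside_def by simp
    ultimately have "zero_outside S q = m" by (rule max)
    then have "zero_outside S q y = m y" by simp
    then show "q y = m y" using y unfolding zero_outside_def by simp
  qed
  note linear = minimal_sublinear_on_linear[OF S ms minimal]
  show ?thesis by (rule that[of m]) (simp_all add: linear mp)
qed

lemma convex_cone_combination:
  fixes H :: "'a::real_vector set"
  assumes "convex H" "c1 \<in> H" "c2 \<in> H" "t1 \<ge> 0" "t2 \<ge> 0" "t1 + t2 > 0"
  obtains c where "c \<in> H" "(t1 + t2) *\<^sub>R (c - v) = t1 *\<^sub>R (c1 - v) + t2 *\<^sub>R (c2 - v)"
proof
  define t where "t = t1 + t2"
  show "(t1 / t) *\<^sub>R c1 + (t2 / t) *\<^sub>R c2 \<in> H"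
    using convexD[OF assms(1-3), of "t1 / t" "t2 / t"] assms(4-6)
    by (simp add: t_def add_divide_distrib[symmetric])
  have "t *\<^sub>R ((t1 / t) *\<^sub>R c1 + (t2 / t) *\<^sub>R c2) = t1 *\<^sub>R c1 + t2 *\<^sub>R c2"
    using assms(6) by (simp add: t_def scaleR_add_right)
  then show "(t1 + t2) *\<^sub>R ((t1 / t) *\<^sub>R c1 + (t2 / t) *\<^sub>R c2 - v) = t1 *\<^sub>R (c1 - v) + t2 *\<^sub>R (c2 - v)"
    by (simp add: t_def scaleR_diff_right algebra_simps)
qed

definition sep_gauge :: "'a::real_normed_vector set \<Rightarrow> 'a \<Rightarrow> real \<Rightarrow> 'a \<Rightarrow> real" where
  "sep_gauge H v \<delta> y = (INF (c, t)\<in>H \<times> {0..}. norm (y + t *\<^sub>R (c - v)) - t * \<delta>)"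

lemma sep_gauge_bdd_below:
  assumes far: "\<forall>c\<in>H. \<delta> \<le> norm (c - v)"
  shows "bdd_below ((\<lambda>(c, t). norm (y + t *\<^sub>R (c - v)) - t * \<delta>) ` (H \<times> {0..}))"
proof (rule bdd_belowI2)
  fix z assume "z \<in> H \<times> {0::real..}"
  then obtain c t where z: "z = (c, t)" "c \<in> H" "t \<ge> 0" by auto
  then have "t * \<delta> \<le> norm (t *\<^sub>R (c - v))" using far by (simp add: mult_left_mono)
  moreover have "norm (t *\<^sub>R (c - v)) \<le> norm (y + t *\<^sub>R (c - v)) + norm y"
    using norm_triangle_ineq4[of "y + t *\<^sub>R (c - v)" y] by simp
  ultimately show "- norm y \<le> (case z of (c, t) \<Rightarrow> norm (y + t *\<^sub>R (c - v)) - t * \<delta>)"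
    unfolding z by simp
qed

lemma sep_gauge_le:
  assumes "\<forall>c\<in>H. \<delta> \<le> norm (c - v)" and "c \<in> H" "t \<ge> 0"
  shows "sep_gauge H v \<delta> y \<le> norm (y + t *\<^sub>R (c - v)) - t * \<delta>"
  unfolding sep_gauge_def using cINF_lower[OF sep_gauge_bdd_below[OF assms(1)], of "(c, t)"] assms(2,3)
  by simp

lemma sep_gauge_subadditive:
  assumes cvx: "convex H" and ne: "H \<noteq> {}" and far: "\<forall>c\<in>H. \<delta> \<le> norm (c - v)"
  shows "sep_gauge H v \<delta> (x + y) \<le> sep_gauge H v \<delta> x + sep_gauge H v \<delta> y"
  unfolding sep_gauge_def[of H v \<delta> x] sep_gauge_def[of H v \<delta> y]
proof (rule le_INF_add[OF _ _ sep_gauge_bdd_below[OF far] sep_gauge_bdd_below[OF far]])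
  fix z1 z2 assume "z1 \<in> H \<times> {0::real..}" "z2 \<in> H \<times> {0::real..}"
  then obtain c1 t1 c2 t2 where z: "z1 = (c1, t1)" "z2 = (c2, t2)"
    and c: "c1 \<in> H" "c2 \<in> H" "t1 \<ge> 0" "t2 \<ge> 0" by auto
  show "sep_gauge H v \<delta> (x + y)
      \<le> (case z1 of (c, t) \<Rightarrow> norm (x + t *\<^sub>R (c - v)) - t * \<delta>)
        + (case z2 of (c, t) \<Rightarrow> norm (y + t *\<^sub>R (c - v)) - t * \<delta>)"
  proof (cases "t1 + t2 = 0")
    case True
    then have "t1 = 0" "t2 = 0" using c by auto
    then show ?thesis
      using sep_gauge_le[OF far c(1), of 0 "x + y"] norm_triangle_ineq[of x y] z by simp
  next
    case False
    then obtain c where "c \<in> H" and eq: "(t1 + t2) *\<^sub>R (c - v) = t1 *\<^sub>R (c1 - v) + t2 *\<^sub>R (c2 - v)"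
      using convex_cone_combination[OF cvx c(1,2), of t1 t2 v] c by force
    then have "sep_gauge H v \<delta> (x + y)
        \<le> norm ((x + t1 *\<^sub>R (c1 - v)) + (y + t2 *\<^sub>R (c2 - v))) - t1 * \<delta> - t2 * \<delta>"
      using sep_gauge_le[OF far, of c "t1 + t2" "x + y"] c by (simp add: algebra_simps)
    then show ?thesis
      using norm_triangle_ineq[of "x + t1 *\<^sub>R (c1 - v)" "y + t2 *\<^sub>R (c2 - v)"] z by simp
  qed
qed (use ne in auto)

lemma sep_gauge_pos_homogeneous:
  assumes ne: "H \<noteq> {}" and far: "\<forall>c\<in>H. \<delta> \<le> norm (c - v)" and s: "s > 0"
  shows "sep_gauge H v \<delta> (s *\<^sub>R x) \<le> s * sep_gauge H v \<delta> x"
  unfolding sep_gauge_def[of H v \<delta> x]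
proof (rule le_mult_INF[OF _ s])
  fix z assume "z \<in> H \<times> {0::real..}"
  then obtain c t where z: "z = (c, t)" and c: "c \<in> H" "t \<ge> 0" by auto
  have "sep_gauge H v \<delta> (s *\<^sub>R x) \<le> norm (s *\<^sub>R (x + t *\<^sub>R (c - v))) - s * (t * \<delta>)"
    using sep_gauge_le[OF far c(1), of "s * t" "s *\<^sub>R x"] c s by (simp add: algebra_simps)
  then show "sep_gauge H v \<delta> (s *\<^sub>R x)
      \<le> s * (case z of (c, t) \<Rightarrow> norm (x + t *\<^sub>R (c - v)) - t * \<delta>)"
    using s unfolding z by (simp add: right_diff_distrib)
qed (use ne in auto)

lemma sep_gauge_sublinear:
  assumes "convex H" "H \<noteq> {}" and "\<forall>c\<in>H. \<delta> \<le> norm (c - v)"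
  shows "sublinear_on UNIV (sep_gauge H v \<delta>)"
  using sep_gauge_subadditive[OF assms] sep_gauge_pos_homogeneous[OF assms(2,3)]
  by (intro sublinear_onI)

lemma sep_gauge_le_norm: "c \<in> H \<Longrightarrow> \<forall>c\<in>H. \<delta> \<le> norm (c - v) \<Longrightarrow> sep_gauge H v \<delta> y \<le> norm y"
  using sep_gauge_le[of H \<delta> v c 0 y] by simp

lemma sep_gauge_separates: "c \<in> H \<Longrightarrow> \<forall>c\<in>H. \<delta> \<le> norm (c - v) \<Longrightarrow> sep_gauge H v \<delta> (v - c) \<le> - \<delta>"
  using sep_gauge_le[of H \<delta> v c 1 "v - c"] by simp

corollary hahn_banach_linear:
  assumes p: "sublinear_on UNIV p"
  obtains f where "linear f" "\<And>x. f x \<le> p x"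
proof (rule hahn_banach_sublinear[OF subspace_UNIV p])
  fix f assume add: "\<And>x y. x \<in> UNIV \<Longrightarrow> y \<in> UNIV \<Longrightarrow> f (x + y) = f x + f y"
    and scale: "\<And>c x. x \<in> UNIV \<Longrightarrow> f (c *\<^sub>R x) = c * f x"
    and below: "\<And>x. x \<in> UNIV \<Longrightarrow> f x \<le> p x"
  have "linear f" by (rule linearI) (simp_all add: add scale)
  then show ?thesis using that below by blast
qed

theorem separating_functional:
  fixes H :: "'a::real_normed_vector set"
  assumes cvx: "convex H" and ne: "H \<noteq> {}" and v: "v \<notin> closure H"
  obtains f \<delta> where "linear f" "\<And>a. \<bar>f a\<bar> \<le> norm a" "\<delta> > 0" "\<And>c. c \<in> H \<Longrightarrow> f v + \<delta> \<le> f c"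
proof -
  define \<delta> where "\<delta> = infdist v H"
  have "\<delta> \<noteq> 0" using v in_closure_iff_infdist_zero[OF ne] unfolding \<delta>_def by blast
  then have \<delta>: "\<delta> > 0" using infdist_nonneg[of v H] unfolding \<delta>_def by linarith
  have far: "\<forall>c\<in>H. \<delta> \<le> norm (c - v)"
    using infdist_le[of _ H v] unfolding \<delta>_def by (simp add: dist_norm norm_minus_commute)
  obtain c0 where c0: "c0 \<in> H" using ne by blast
  obtain f where lin: "linear f" and below: "\<And>x. f x \<le> sep_gauge H v \<delta> x"
    using hahn_banach_linear[OF sep_gauge_sublinear[OF cvx ne far]] by blast
  show ?thesis
  proof (rule that[OF lin _ \<delta>])
    fix a
    have "f x \<le> norm x" for x using order_trans[OF below sep_gauge_le_norm[OF c0 far]] .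
    then have "f a \<le> norm a" and "f (- a) \<le> norm (- a)" by blast+
    then show "\<bar>f a\<bar> \<le> norm a" using linear_neg[OF lin, of a] by simp
  next
    fix c assume "c \<in> H"
    then have "f (v - c) \<le> - \<delta>" using order_trans[OF below sep_gauge_separates[OF _ far]] by blast
    then show "f v + \<delta> \<le> f c" using linear_diff[OF lin, of v c] by simp
  qed
qed

(* Real sequences form a real vector space under pointwise operations; this lets the
   Hahn-Banach theorem act on the subspace of bounded sequences. *)
instantiation "fun" :: (type, real_vector) real_vector
begin
definition scaleR_fun :: "real \<Rightarrow> ('a \<Rightarrow> 'b) \<Rightarrow> 'a \<Rightarrow> 'b" where
  "scaleR_fun r f = (\<lambda>x. r *\<^sub>R f x)"
instance by standard (auto simp: scaleR_fun_def fun_eq_iff scaleR_add_right scaleR_add_left)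
end

lemma Bseq_add_seq:
  fixes f g :: "nat \<Rightarrow> 'a::real_normed_vector"
  assumes "Bseq f" "Bseq g"
  shows "Bseq (\<lambda>n. f n + g n)"
proof -
  obtain K1 K2 where "\<And>n. norm (f n) \<le> K1" "\<And>n. norm (g n) \<le> K2"
    using assms unfolding Bseq_def by blast
  then have "norm (f n + g n) \<le> K1 + K2" for n by (meson add_mono norm_triangle_le)
  then show ?thesis by (rule BseqI')
qed

lemma Bseq_scale_seq: "Bseq f \<Longrightarrow> Bseq (\<lambda>n. c * f n :: real)"
  by (rule Bseq_mult[OF Bfun_const])

lemma subspace_Bseq: "subspace {s :: nat \<Rightarrow> real. Bseq s}"
proof -
  have "s + t = (\<lambda>n. s n + t n)" and "c *\<^sub>R s = (\<lambda>n. c * s n)" for c and s t :: "nat \<Rightarrow> real"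
    by (simp_all add: fun_eq_iff scaleR_fun_def)
  then show ?thesis
    unfolding subspace_def by (simp add: Bseq_add_seq Bseq_scale_seq zero_fun_def)
qed

definition cesaro_mean :: "(nat \<Rightarrow> real) \<Rightarrow> nat \<Rightarrow> real" where
  "cesaro_mean s n = (\<Sum>j\<le>n. s j) / real (Suc n)"

lemma cesaro_mean_le: "(\<And>j. s j \<le> B) \<Longrightarrow> cesaro_mean s n \<le> B"
  using sum_bounded_above[of "{..n}" s B] unfolding cesaro_mean_def by (simp add: divide_le_eq mult.commute)

lemma cesaro_mean_abs_le: "(\<And>j. \<bar>s j\<bar> \<le> B) \<Longrightarrow> \<bar>cesaro_mean s n\<bar> \<le> B"
proof -
  assume "\<And>j. \<bar>s j\<bar> \<le> B"
  then have "cesaro_mean s n \<le> B" and "cesaro_mean (\<lambda>j. - s j) n \<le> B"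
    by (auto intro!: cesaro_mean_le dest: abs_le_D1 abs_le_D2)
  moreover have "cesaro_mean (\<lambda>j. - s j) n = - cesaro_mean s n"
    unfolding cesaro_mean_def by (simp add: sum_negf)
  ultimately show ?thesis by linarith
qed

lemma cesaro_mean_add: "cesaro_mean (\<lambda>j. s j + t j) n = cesaro_mean s n + cesaro_mean t n"
  unfolding cesaro_mean_def by (simp add: sum.distrib add_divide_distrib)

lemma cesaro_mean_scale: "cesaro_mean (\<lambda>j. c * s j) n = c * cesaro_mean s n"
  unfolding cesaro_mean_def by (simp add: sum_distrib_left[symmetric])

definition cesaro_tail_sup :: "(nat \<Rightarrow> real) \<Rightarrow> nat \<Rightarrow> real" where
  "cesaro_tail_sup s N = (SUP n\<in>{N..}. cesaro_mean s n)"

definition upper_cesaro :: "(nat \<Rightarrow> real) \<Rightarrow> real" where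
  "upper_cesaro s = (INF N. cesaro_tail_sup s N)"

lemma cesaro_tail_sup:
  assumes B: "\<forall>j. \<bar>s j\<bar> \<le> B"
  shows "\<And>n N. N \<le> n \<Longrightarrow> cesaro_mean s n \<le> cesaro_tail_sup s N"
    and "\<And>N M. (\<And>n. N \<le> n \<Longrightarrow> cesaro_mean s n \<le> M) \<Longrightarrow> cesaro_tail_sup s N \<le> M"
    and "\<And>N. upper_cesaro s \<le> cesaro_tail_sup s N"
    and "bdd_below (range (cesaro_tail_sup s))"
proof -
  have mean: "\<bar>cesaro_mean s n\<bar> \<le> B" for n using B by (simp add: cesaro_mean_abs_le)
  have "bdd_above (cesaro_mean s ` {N..})" for N
    using mean by (intro bdd_aboveI2[of _ _ B]) (auto dest: abs_le_D1)
  then show upper: "cesaro_mean s n \<le> cesaro_tail_sup s N" if "N \<le> n" for n N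
    unfolding cesaro_tail_sup_def using that by (intro cSUP_upper) auto
  show "cesaro_tail_sup s N \<le> M" if "\<And>n. N \<le> n \<Longrightarrow> cesaro_mean s n \<le> M" for N M
    unfolding cesaro_tail_sup_def using that by (intro cSUP_least) auto
  have "- B \<le> cesaro_tail_sup s N" for N
    using upper[of N N] mean[of N] by linarith
  then show bdd: "bdd_below (range (cesaro_tail_sup s))" by (intro bdd_belowI2)
  show "upper_cesaro s \<le> cesaro_tail_sup s N" for N
    unfolding upper_cesaro_def by (rule cINF_lower[OF bdd]) simp
qed

lemma Bseq_real_abs_bound: "Bseq s \<Longrightarrow> \<exists>B. \<forall>j. \<bar>s j :: real\<bar> \<le> B"
  unfolding Bseq_def real_norm_def by blast

lemma upper_cesaro_subadditive:
  assumes "Bseq s" "Bseq t"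
  shows "upper_cesaro (s + t) \<le> upper_cesaro s + upper_cesaro t"
proof -
  obtain Bs Bt where Bs: "\<forall>j. \<bar>s j\<bar> \<le> Bs" and Bt: "\<forall>j. \<bar>t j\<bar> \<le> Bt"
    using Bseq_real_abs_bound assms by meson
  have Bst: "\<forall>j. \<bar>(s + t) j\<bar> \<le> Bs + Bt"
    using Bs Bt by (smt (verit) plus_fun_apply)
  show ?thesis unfolding upper_cesaro_def[of s] upper_cesaro_def[of t]
  proof (rule le_INF_add[OF _ _ cesaro_tail_sup(4)[OF Bs] cesaro_tail_sup(4)[OF Bt]])
    fix N1 N2 :: nat
    have "upper_cesaro (s + t) \<le> cesaro_tail_sup (s + t) (max N1 N2)"
      by (rule cesaro_tail_sup(3)[OF Bst])
    also have "\<dots> \<le> cesaro_tail_sup s N1 + cesaro_tail_sup t N2"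
    proof (rule cesaro_tail_sup(2)[OF Bst])
      fix n assume "max N1 N2 \<le> n"
      then have "cesaro_mean s n + cesaro_mean t n \<le> cesaro_tail_sup s N1 + cesaro_tail_sup t N2"
        using cesaro_tail_sup(1)[OF Bs, of N1 n] cesaro_tail_sup(1)[OF Bt, of N2 n] by simp
      then show "cesaro_mean (s + t) n \<le> cesaro_tail_sup s N1 + cesaro_tail_sup t N2"
        using cesaro_mean_add[of s t n] by (simp add: plus_fun_def)
    qed
    finally show "upper_cesaro (s + t) \<le> cesaro_tail_sup s N1 + cesaro_tail_sup t N2" .
  qed auto
qed

lemma upper_cesaro_pos_homogeneous:
  assumes c: "c > 0" and "Bseq s"
  shows "upper_cesaro (c *\<^sub>R s) \<le> c * upper_cesaro s"
proof -
  obtain B where B: "\<forall>j. \<bar>s j\<bar> \<le> B" using Bseq_real_abs_bound assms(2) by blast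
  have Bc: "\<forall>j. \<bar>(c *\<^sub>R s) j\<bar> \<le> c * B" using B c by (simp add: abs_mult scaleR_fun_def)
  show ?thesis unfolding upper_cesaro_def[of s]
  proof (rule le_mult_INF[OF _ c])
    fix N :: nat
    have "upper_cesaro (c *\<^sub>R s) \<le> cesaro_tail_sup (c *\<^sub>R s) N"
      by (rule cesaro_tail_sup(3)[OF Bc])
    also have "\<dots> \<le> c * cesaro_tail_sup s N"
    proof (rule cesaro_tail_sup(2)[OF Bc])
      fix n assume "N \<le> n"
      then have "c * cesaro_mean s n \<le> c * cesaro_tail_sup s N"
        using cesaro_tail_sup(1)[OF B] c by simp
      then show "cesaro_mean (c *\<^sub>R s) n \<le> c * cesaro_tail_sup s N"
        using cesaro_mean_scale[of c s n] by (simp add: scaleR_fun_def)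
    qed
    finally show "upper_cesaro (c *\<^sub>R s) \<le> c * cesaro_tail_sup s N" .
  qed auto
qed

lemma upper_cesaro_sublinear: "sublinear_on {s. Bseq s} upper_cesaro"
  using upper_cesaro_subadditive upper_cesaro_pos_homogeneous by (intro sublinear_onI) auto

lemma upper_cesaro_le:
  assumes "Bseq s" and "\<And>n. s n \<le> M"
  shows "upper_cesaro s \<le> M"
proof -
  obtain B where B: "\<forall>j. \<bar>s j\<bar> \<le> B" using Bseq_real_abs_bound[OF assms(1)] by blast
  have "cesaro_tail_sup s 0 \<le> M" by (rule cesaro_tail_sup(2)[OF B]) (rule cesaro_mean_le[OF assms(2)])
  then show ?thesis using cesaro_tail_sup(3)[OF B, of 0] by linarith
qed

lemma upper_cesaro_bounded_partial_sums:
  assumes "Bseq d" and K: "\<And>n. \<bar>\<Sum>j\<le>n. d j\<bar> \<le> K"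
  shows "upper_cesaro d \<le> 0"
proof (rule field_le_epsilon)
  fix e :: real assume e: "e > 0"
  obtain B where B: "\<forall>j. \<bar>d j\<bar> \<le> B" using Bseq_real_abs_bound[OF assms(1)] by blast
  obtain N where N: "K < real N * e" using ex_less_of_nat_mult[OF e] by blast
  have "cesaro_tail_sup d N \<le> e"
  proof (rule cesaro_tail_sup(2)[OF B])
    fix n assume "N \<le> n"
    then have "K \<le> real (Suc n) * e" using N e by (smt (verit) mult_right_mono of_nat_le_iff of_nat_Suc)
    then have "K / real (Suc n) \<le> e" by (simp add: divide_le_eq mult.commute)
    moreover have "cesaro_mean d n \<le> K / real (Suc n)"
      unfolding cesaro_mean_def using K[of n] by (intro divide_right_mono) auto
    ultimately show "cesaro_mean d n \<le> e" by linarith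
  qed
  then show "upper_cesaro d \<le> 0 + e" using cesaro_tail_sup(3)[OF B, of N] by linarith
qed

(* Differences of a bounded sequence and its shift have telescoping, hence bounded,
   partial sums; this is the source of shift invariance. *)
lemma upper_cesaro_shift_difference:
  assumes s: "Bseq s"
  shows "upper_cesaro (\<lambda>n. s n - s (Suc n)) \<le> 0" and "upper_cesaro (\<lambda>n. s (Suc n) - s n) \<le> 0"
proof -
  obtain B where B: "\<forall>j. \<bar>s j\<bar> \<le> B" using Bseq_real_abs_bound[OF s] by blast
  have s': "Bseq (\<lambda>n. s (Suc n))" using s by (simp add: Bseq_Suc_iff)
  show "upper_cesaro (\<lambda>n. s n - s (Suc n)) \<le> 0"
  proof (rule upper_cesaro_bounded_partial_sums)
    show "Bseq (\<lambda>n. s n - s (Suc n))"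
      using Bseq_add_seq[OF s Bseq_scale_seq[OF s', of "-1"]] by simp
    show "\<bar>\<Sum>j\<le>n. s j - s (Suc j)\<bar> \<le> 2 * B" for n
      using B[rule_format, of 0] B[rule_format, of "Suc n"] by (simp add: sum_telescope)
  qed
  show "upper_cesaro (\<lambda>n. s (Suc n) - s n) \<le> 0"
  proof (rule upper_cesaro_bounded_partial_sums)
    show "Bseq (\<lambda>n. s (Suc n) - s n)"
      using Bseq_add_seq[OF s' Bseq_scale_seq[OF s, of "-1"]] by simp
    show "\<bar>\<Sum>j\<le>n. s (Suc j) - s j\<bar> \<le> 2 * B" for n
      using B[rule_format, of 0] B[rule_format, of "Suc n"] sum_telescope[of "\<lambda>i. - s i" n] by simp
  qed
qed

definition real_banach_limit :: "((nat \<Rightarrow> real) \<Rightarrow> real) \<Rightarrow> bool" where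
  "real_banach_limit F \<longleftrightarrow>
     (\<forall>s t. Bseq s \<longrightarrow> Bseq t \<longrightarrow> F (\<lambda>n. s n + t n) = F s + F t) \<and>
     (\<forall>c s. Bseq s \<longrightarrow> F (\<lambda>n. c * s n) = c * F s) \<and>
     (\<forall>s M. Bseq s \<longrightarrow> (\<forall>n. s n \<le> M) \<longrightarrow> F s \<le> M) \<and>
     (\<forall>s. Bseq s \<longrightarrow> F (\<lambda>n. s (Suc n)) = F s)"

lemma real_banach_limitD:
  assumes "real_banach_limit F" and "Bseq s"
  shows "\<And>t. Bseq t \<Longrightarrow> F (\<lambda>n. s n + t n) = F s + F t"
    and "\<And>c. F (\<lambda>n. c * s n) = c * F s"
    and "\<And>M. (\<And>n. s n \<le> M) \<Longrightarrow> F s \<le> M"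
    and "F (\<lambda>n. s (Suc n)) = F s"
  using assms unfolding real_banach_limit_def by blast+

lemma real_banach_limit_lower:
  assumes F: "real_banach_limit F" and s: "Bseq s" and m: "\<And>n. m \<le> s n"
  shows "m \<le> F s"
proof -
  have "F (\<lambda>n. (-1) * s n) \<le> - m"
    using m by (intro real_banach_limitD(3)[OF F Bseq_scale_seq[OF s]]) (simp add: minus_le_iff)
  moreover have "F (\<lambda>n. (-1) * s n) = - F s" using real_banach_limitD(2)[OF F s, of "-1"] by simp
  ultimately show ?thesis by linarith
qed

lemma real_banach_limit_const:
  assumes F: "real_banach_limit F"
  shows "F (\<lambda>n. c) = c"
proof -
  have "F (\<lambda>n. c) \<le> c" by (rule real_banach_limitD(3)[OF F]) simp_all
  moreover have "c \<le> F (\<lambda>n. c)" by (rule real_banach_limit_lower[OF F]) simp_all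
  ultimately show ?thesis by linarith
qed

(* Real Banach limits exist: take a linear minorant of the upper Cesaro limit. *)
theorem real_banach_limit_exists: "\<exists>F. real_banach_limit F"
proof (rule hahn_banach_sublinear[OF subspace_Bseq upper_cesaro_sublinear], unfold mem_Collect_eq)
  fix F assume add: "\<And>s t. Bseq s \<Longrightarrow> Bseq t \<Longrightarrow> F (s + t) = F s + F t"
    and scale: "\<And>c s. Bseq s \<Longrightarrow> F (c *\<^sub>R s) = c * F s"
    and below: "\<And>s. Bseq s \<Longrightarrow> F s \<le> upper_cesaro s"
  have add': "F (\<lambda>n. s n + t n) = F s + F t" if "Bseq s" "Bseq t" for s t
    using add[OF that] by (simp add: plus_fun_def)
  have scale': "F (\<lambda>n. c * s n) = c * F s" if "Bseq s" for c s
    using scale[OF that] by (simp add: scaleR_fun_def)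
  have diff: "F (\<lambda>n. s n - t n) = F s - F t" if "Bseq s" "Bseq t" for s t
    using add'[OF that(1) Bseq_scale_seq[OF that(2), of "-1"]] scale'[OF that(2), of "-1"] by simp
  have shift: "F (\<lambda>n. s (Suc n)) = F s" if s: "Bseq s" for s
  proof -
    have s': "Bseq (\<lambda>n. s (Suc n))" using s by (simp add: Bseq_Suc_iff)
    have "F s - F (\<lambda>n. s (Suc n)) \<le> 0"
      using diff[OF s s'] below[OF Bseq_add_seq[OF s Bseq_scale_seq[OF s', of "-1"]]]
        upper_cesaro_shift_difference(1)[OF s] by simp
    moreover have "F (\<lambda>n. s (Suc n)) - F s \<le> 0"
      using diff[OF s' s] below[OF Bseq_add_seq[OF s' Bseq_scale_seq[OF s, of "-1"]]]
        upper_cesaro_shift_difference(2)[OF s] by simp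
    ultimately show ?thesis by linarith
  qed
  have "F s \<le> M" if "Bseq s" "\<forall>n. s n \<le> M" for s M
    using below[OF that(1)] upper_cesaro_le[OF that(1)] that(2) by (meson order_trans)
  then have "real_banach_limit F" unfolding real_banach_limit_def using add' scale' shift by blast
  then show ?thesis by blast
qed

lemma linear_scaleC_decompose:
  fixes f :: "'a::complex_vector \<Rightarrow> real"
  assumes "linear f"
  shows "f (scaleC c w) = Re c * f w + Im c * f (scaleC \<i> w)"
proof -
  have "scaleC c w = scaleC (complex_of_real (Re c)) w + scaleC (complex_of_real (Im c)) (scaleC \<i> w)"
    by (subst complex_eq[of c]) (simp add: scaleC_add_left scaleC_scaleC mult.commute)
  also have "\<dots> = Re c *\<^sub>R w + Im c *\<^sub>R scaleC \<i> w" by (simp add: scaleR_scaleC)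
  finally show ?thesis using assms by (simp add: linear_add linear_scale)
qed

lemma linf_norm_le_sup_norm: "y \<in> linf \<Longrightarrow> norm (y n) \<le> sup_norm y"
  unfolding linf_def sup_norm_def
  by (auto intro!: cSUP_upper bounded_imp_bdd_above simp: bounded_norm_comp image_image[symmetric])

lemma linf_functional_Bseq:
  assumes "y \<in> linf" and "\<And>a. \<bar>f a\<bar> \<le> norm a"
  shows "Bseq (\<lambda>n. f (y n))"
proof (rule BseqI')
  show "norm (f (y n)) \<le> sup_norm y" for n
    using assms(2)[of "y n"] linf_norm_le_sup_norm[OF assms(1), of n] by simp
qed

lemma real_banach_limit_lincomb:
  assumes F: "real_banach_limit F" and "Bseq a" "Bseq b"
  shows "F (\<lambda>n. \<alpha> * a n + \<beta> * b n) = \<alpha> * F a + \<beta> * F b"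
  using real_banach_limitD(1)[OF F Bseq_scale_seq[OF assms(2)] Bseq_scale_seq[OF assms(3)]]
    real_banach_limitD(2)[OF F assms(2)] real_banach_limitD(2)[OF F assms(3)] by simp

lemma real_banach_limit_abs_le:
  assumes F: "real_banach_limit F" and s: "Bseq s" and M: "\<And>n. \<bar>s n\<bar> \<le> M"
  shows "\<bar>F s\<bar> \<le> M"
proof -
  have "F s \<le> M" using M by (intro real_banach_limitD(3)[OF F s]) (meson abs_le_D1)
  moreover have "- M \<le> F s" using M by (intro real_banach_limit_lower[OF F s]) (meson abs_le_D2 minus_le_iff)
  ultimately show ?thesis by linarith
qed

(* Complexification: from a real Banach limit F and a real-linear f we obtain the
   complex-valued functional y \<mapsto> (F (f \<circ> y) - i F (f \<circ> (i y))) / 2, whose real part is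
   F (f \<circ> y) / 2.  The factor 1/2 keeps its norm at most 1. *)
definition complexified_limit ::
  "((nat \<Rightarrow> real) \<Rightarrow> real) \<Rightarrow> ('a::complex_vector \<Rightarrow> real) \<Rightarrow> (nat \<Rightarrow> 'a) \<Rightarrow> complex" where
  "complexified_limit F f y =
     (complex_of_real (F (\<lambda>n. f (y n))) - \<i> * complex_of_real (F (\<lambda>n. f (scaleC \<i> (y n))))) / 2"

lemma Re_complexified_limit: "Re (complexified_limit F f y) = F (\<lambda>n. f (y n)) / 2"
  and Im_complexified_limit: "Im (complexified_limit F f y) = - F (\<lambda>n. f (scaleC \<i> (y n))) / 2"
  unfolding complexified_limit_def by simp_all

lemma complexified_limit_scaleC:
  assumes F: "real_banach_limit F" and f: "linear f"
    and a: "Bseq (\<lambda>n. f (y n))" and b: "Bseq (\<lambda>n. f (scaleC \<i> (y n)))"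
  shows "complexified_limit F f (\<lambda>n. scaleC c (y n)) = c * complexified_limit F f y"
proof -
  let ?a = "F (\<lambda>n. f (y n))" and ?b = "F (\<lambda>n. f (scaleC \<i> (y n)))"
  have dec_c: "f (scaleC c w) = Re c * f w + Im c * f (scaleC \<i> w)" for w
    by (rule linear_scaleC_decompose[OF f])
  have dec_ic: "f (scaleC \<i> (scaleC c w)) = - Im c * f w + Re c * f (scaleC \<i> w)" for w
    using linear_scaleC_decompose[OF f, of "\<i> * c" w] by (simp add: scaleC_scaleC)
  have "F (\<lambda>n. f (scaleC c (y n))) = Re c * ?a + Im c * ?b"
    unfolding dec_c by (rule real_banach_limit_lincomb[OF F a b])
  moreover have "F (\<lambda>n. f (scaleC \<i> (scaleC c (y n)))) = - Im c * ?a + Re c * ?b"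
    unfolding dec_ic by (rule real_banach_limit_lincomb[OF F a b])
  ultimately show ?thesis
    by (intro complex_eqI) (simp_all add: Re_complexified_limit Im_complexified_limit algebra_simps)
qed

theorem complexified_banach_limit:
  fixes f :: "'a::complex_normed_vector \<Rightarrow> real"
  assumes F: "real_banach_limit F" and f: "linear f" and fb: "\<And>a. \<bar>f a\<bar> \<le> norm a"
  shows "banach_limit_functional (complexified_limit F f)"
proof -
  have fib: "\<bar>f (scaleC \<i> a)\<bar> \<le> norm a" for a using fb[of "scaleC \<i> a"] by (simp add: norm_scaleC)
  note Bseq_re = linf_functional_Bseq[OF _ fb] and Bseq_im = linf_functional_Bseq[OF _ fib]
  have add: "complexified_limit F f (\<lambda>n. y n + z n) = complexified_limit F f y + complexified_limit F f z"
    if "y \<in> linf" "z \<in> linf" for y z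
    using real_banach_limitD(1)[OF F Bseq_re[OF that(1)] Bseq_re[OF that(2)]]
      real_banach_limitD(1)[OF F Bseq_im[OF that(1)] Bseq_im[OF that(2)]]
    by (intro complex_eqI) (simp_all add: Re_complexified_limit Im_complexified_limit linear_add[OF f] scaleC_add_right)
  have bound: "cmod (complexified_limit F f y) \<le> sup_norm y" if y: "y \<in> linf" for y
  proof -
    have "\<bar>F (\<lambda>n. f (y n))\<bar> \<le> sup_norm y" "\<bar>F (\<lambda>n. f (scaleC \<i> (y n)))\<bar> \<le> sup_norm y"
      using real_banach_limit_abs_le[OF F Bseq_re[OF y]] real_banach_limit_abs_le[OF F Bseq_im[OF y]]
        fb fib linf_norm_le_sup_norm[OF y] order_trans by meson+
    then show ?thesis using cmod_le[of "complexified_limit F f y"]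
      by (simp add: Re_complexified_limit Im_complexified_limit)
  qed
  have shift: "complexified_limit F f (shift y) = complexified_limit F f y" if y: "y \<in> linf" for y
    using real_banach_limitD(4)[OF F Bseq_re[OF y]] real_banach_limitD(4)[OF F Bseq_im[OF y]]
    by (simp add: complexified_limit_def shift_def)
  show ?thesis
    unfolding banach_limit_functional_def
    using add bound shift complexified_limit_scaleC[OF F f Bseq_re Bseq_im] by blast
qed

theorem mainTheorem15:
  fixes x :: "nat \<Rightarrow> 'a::complex_normed_vector" and v :: 'a
  assumes "x \<in> linf"
    and "strongly_almost_convergent x v"
  shows "v \<in> closure (convex hull (range x))"
proof (rule ccontr)
  assume "v \<notin> closure (convex hull (range x))"
  then obtain f \<delta> where f: "linear f" and fb: "\<And>a. \<bar>f a\<bar> \<le> norm a" and "\<delta> > 0"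
    and sep: "\<And>c. c \<in> convex hull (range x) \<Longrightarrow> f v + \<delta> \<le> f c"
    using separating_functional[OF convex_convex_hull] by (metis convex_hull_eq_empty range_eqI empty_iff)
  obtain F where F: "real_banach_limit F" using real_banach_limit_exists by blast
  have "complexified_limit F f x = complexified_limit F f (const_seq v)"
    using assms(2) complexified_banach_limit[OF F f fb] unfolding strongly_almost_convergent_def by blast
  then have "Re (complexified_limit F f x) = Re (complexified_limit F f (const_seq v))" by simp
  then have "F (\<lambda>n. f (x n)) = F (\<lambda>n. f v)" by (simp add: Re_complexified_limit const_seq_def)
  also have "\<dots> = f v" by (rule real_banach_limit_const[OF F])
  finally have "F (\<lambda>n. f (x n)) = f v" .
  moreover have "f v + \<delta> \<le> F (\<lambda>n. f (x n))"
    using sep hull_inc[of _ "range x"] by (intro real_banach_limit_lower[OF F linf_functional_Bseq[OF assms(1) fb]]) blast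
  ultimately show False using \<open>\<delta> > 0\<close> by linarith
qed

end
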